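(* For every positive integer $m$ and every distribution $\mathcal D$ on $[0,1]\times\{0,1\}$, $\mathsf{SCDL}_{2m}(\mathcal D)\ge\mathsf{SCDL}_m(\mathcal D)$.
   Context: For $x\in\mathbb R$ write $x_+=\max\{x,0\}$. For a distribution $\mathcal D$ of $(p,y)\in[0,1]\times\{0,1\}$, a positive integer $m$ and $i\in\{0,\ldots,m\}$, let $w_i(p)=(1-|mp-i|)_+$, $\pi_i=\mathbb E_{\mathcal D}[w_i(p)]$ and $q_i=\mathbb E_{\mathcal D}[w_i(p)y]/\pi_i$ (terms with $\pi_i=0$ are $0$). Define $$\mathsf{SCDL}_m(\mathcal D)=\max_{i=0,\ldots,m}\Big(\sum_{j=0}^{i}\pi_j\big(q_j-\tfrac{i+1}{m}\big)_+ +\sum_{j=i+1}^{m}\pi_j\big(\tfrac im-q_j\big)_+\Big).$$ *)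

theory Defs
  imports "HOL-Probability.Probability"
begin

text \<open>A distribution D of pairs (p,y) in [0,1] x {0,1} is modelled as a probability
measure on real x bool (Borel sets) that is concentrated on [0,1] in the first
component; the label y is read as the real number of_bool y.\<close>

definition dist01 :: "(real \<times> bool) measure \<Rightarrow> bool" where
  "dist01 D \<longleftrightarrow> prob_space D \<and> sets D = sets borel \<and> (AE x in D. fst x \<in> {0..1})"

definition wt :: "nat \<Rightarrow> nat \<Rightarrow> real \<Rightarrow> real" where
  "wt m i p = max (1 - \<bar>real m * p - real i\<bar>) 0"

definition piw :: "(real \<times> bool) measure \<Rightarrow> nat \<Rightarrow> nat \<Rightarrow> real" where
  "piw D m i = (\<integral>x. wt m i (fst x) \<partial>D)"

definition qw :: "(real \<times> bool) measure \<Rightarrow> nat \<Rightarrow> nat \<Rightarrow> real" where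
  "qw D m i = (if piw D m i = 0 then 0
               else (\<integral>x. wt m i (fst x) * of_bool (snd x) \<partial>D) / piw D m i)"

definition SCDL :: "nat \<Rightarrow> (real \<times> bool) measure \<Rightarrow> real" where
  "SCDL m D = Max ((\<lambda>i. (\<Sum>j\<in>{0..i}. piw D m j * max (qw D m j - real (i + 1) / real m) 0)
                      + (\<Sum>j\<in>{i+1..m}. piw D m j * max (real i / real m - qw D m j) 0)) ` {0..m})"

end

theory Submission
  imports Defs
begin

text \<open>The hat function of grid \<open>m\<close> centred at \<open>j\<close> is the combination with weights
\<open>1/2, 1, 1/2\<close> of the hat functions of grid \<open>2m\<close> centred at \<open>2j-1, 2j, 2j+1\<close>; hence so are
the unnormalised quantities \<open>\<pi>\<^sub>j\<close> and \<open>\<pi>\<^sub>j q\<^sub>j\<close>. In terms of these, the \<open>i\<close>-th candidate of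
\<open>SCDL\<^sub>m\<close> is a sum of positive parts \<open>(\<pi>\<^sub>j q\<^sub>j - t \<pi>\<^sub>j)\<^sub>+\<close> and \<open>(t \<pi>\<^sub>j - \<pi>\<^sub>j q\<^sub>j)\<^sub>+\<close>, and
by subadditivity of the positive part it is at most \<open>A + B + (a - b)/2\<close>: here \<open>a\<close>, \<open>b\<close> are
the two fine terms of cell \<open>2i+1\<close> and \<open>A + B\<close> collects the other fine terms. Since the
thresholds \<open>i/m\<close>, \<open>(i+1)/m\<close> are also fine thresholds and the positive parts are monotone in
the threshold, the fine candidate \<open>2i\<close> is at least \<open>A + B\<close> and the fine candidate \<open>2i+1\<close>
at least \<open>A + B + a - b\<close>, so one of them dominates.\<close>

definition coarsen :: "(nat \<Rightarrow> real) \<Rightarrow> nat \<Rightarrow> real" where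
  "coarsen f j = (if j = 0 then 0 else f (2 * j - 1) / 2) + f (2 * j) + f (2 * j + 1) / 2"

lemma coarsen_diff: "coarsen (\<lambda>k. f k - g k) j = coarsen f j - coarsen g j"
  by (simp add: coarsen_def diff_divide_distrib)

lemma coarsen_scale: "coarsen (\<lambda>k. c * f k) j = c * coarsen f j"
  by (simp add: coarsen_def algebra_simps)

lemma max_coarsen_le: "max (coarsen f j) 0 \<le> coarsen (\<lambda>k. max (f k) 0) j"
  by (simp add: coarsen_def max_def)

lemma sum_coarsen: "(\<Sum>j=0..n. coarsen f j) = (\<Sum>k=0..2 * n. f k) + f (2 * n + 1) / 2"
proof (induction n)
  case (Suc n)
  have "2 * Suc n = Suc (Suc (2 * n))" by simp
  then show ?case using Suc by (simp add: coarsen_def)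
qed (simp add: coarsen_def)

lemma sum_coarsen_above:
  assumes "i \<le> n"
  shows "(\<Sum>j\<in>{i+1..n}. coarsen f j)
           = (\<Sum>k\<in>{2 * i + 1..2 * n}. f k) + f (2 * n + 1) / 2 - f (2 * i + 1) / 2"
proof -
  have "(\<Sum>j=0..n. coarsen f j) = (\<Sum>j=0..i. coarsen f j) + (\<Sum>j\<in>{i+1..n}. coarsen f j)"
    using sum.ub_add_nat[of 0 i "coarsen f" "n - i"] assms by simp
  moreover have "(\<Sum>k=0..2 * n. f k) = (\<Sum>k=0..2 * i. f k) + (\<Sum>k\<in>{2 * i + 1..2 * n}. f k)"
    using sum.ub_add_nat[of 0 "2 * i" f "2 * n - 2 * i"] assms by simp
  ultimately show ?thesis by (simp add: sum_coarsen)
qed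

definition excess_below :: "(nat \<Rightarrow> real) \<Rightarrow> (nat \<Rightarrow> real) \<Rightarrow> real \<Rightarrow> nat \<Rightarrow> real" where
  "excess_below f g t i = (\<Sum>j=0..i. max (g j - t * f j) 0)"

definition deficit_above :: "nat \<Rightarrow> (nat \<Rightarrow> real) \<Rightarrow> (nat \<Rightarrow> real) \<Rightarrow> real \<Rightarrow> nat \<Rightarrow> real" where
  "deficit_above n f g t i = (\<Sum>j\<in>{i+1..n}. max (t * f j - g j) 0)"

text \<open>The \<open>i\<close>-th candidate of \<open>SCDL\<^sub>n\<close>, written with \<open>f j = \<pi>\<^sub>j\<close> and \<open>g j = \<pi>\<^sub>j q\<^sub>j\<close> so that
no division occurs.\<close>

definition scdl_gap :: "nat \<Rightarrow> (nat \<Rightarrow> real) \<Rightarrow> (nat \<Rightarrow> real) \<Rightarrow> nat \<Rightarrow> real" where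
  "scdl_gap n f g i = excess_below f g (real (i + 1) / real n) i + deficit_above n f g (real i / real n) i"

lemma excess_below_antimono:
  assumes "\<And>k. 0 \<le> f k" and "t \<le> t'"
  shows "excess_below f g t' i \<le> excess_below f g t i"
  unfolding excess_below_def
  by (intro sum_mono max.mono diff_left_mono mult_right_mono) (simp_all add: assms)

lemma deficit_above_mono:
  assumes "\<And>k. 0 \<le> f k" and "t \<le> t'"
  shows "deficit_above n f g t i \<le> deficit_above n f g t' i"
  unfolding deficit_above_def
  by (intro sum_mono max.mono diff_right_mono mult_right_mono) (simp_all add: assms)

lemma excess_below_coarsen_le:
  "excess_below (coarsen f) (coarsen g) t i
     \<le> excess_below f g t (2 * i) + max (g (2 * i + 1) - t * f (2 * i + 1)) 0 / 2"
proof -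
  have "excess_below (coarsen f) (coarsen g) t i
          \<le> (\<Sum>j=0..i. coarsen (\<lambda>k. max (g k - t * f k) 0) j)"
    unfolding excess_below_def coarsen_scale[symmetric] coarsen_diff[symmetric]
    by (intro sum_mono max_coarsen_le)
  then show ?thesis by (simp add: sum_coarsen excess_below_def)
qed

lemma deficit_above_coarsen_le:
  assumes "i \<le> n" and "f (2 * n + 1) = 0" and "g (2 * n + 1) = 0"
  shows "deficit_above n (coarsen f) (coarsen g) t i
     \<le> deficit_above (2 * n) f g t (2 * i) - max (t * f (2 * i + 1) - g (2 * i + 1)) 0 / 2"
proof -
  have "deficit_above n (coarsen f) (coarsen g) t i
          \<le> (\<Sum>j\<in>{i+1..n}. coarsen (\<lambda>k. max (t * f k - g k) 0) j)"
    unfolding deficit_above_def coarsen_scale[symmetric] coarsen_diff[symmetric]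
    by (intro sum_mono max_coarsen_le)
  also have "\<dots> = deficit_above (2 * n) f g t (2 * i) + max (t * f (2 * n + 1) - g (2 * n + 1)) 0 / 2
                     - max (t * f (2 * i + 1) - g (2 * i + 1)) 0 / 2"
    unfolding deficit_above_def by (rule sum_coarsen_above[OF assms(1)])
  finally show ?thesis using assms(2,3) by simp
qed

lemma scdl_gap_even_ge:
  assumes "0 < n" and "\<And>k. 0 \<le> f k"
  shows "excess_below f g (real (i + 1) / real n) (2 * i)
           + deficit_above (2 * n) f g (real i / real n) (2 * i)
           \<le> scdl_gap (2 * n) f g (2 * i)"
proof -
  have "excess_below f g (real (i + 1) / real n) (2 * i)
          \<le> excess_below f g (real (2 * i + 1) / real (2 * n)) (2 * i)"
    using assms(1) by (intro excess_below_antimono assms(2)) (simp add: field_simps)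
  moreover have "real (2 * i) / real (2 * n) = real i / real n"
    by simp
  ultimately show ?thesis
    by (simp add: scdl_gap_def)
qed

lemma scdl_gap_odd_ge:
  assumes "0 < n" and "\<And>k. 0 \<le> f k"
  shows "excess_below f g (real (i + 1) / real n) (2 * i + 1)
           + deficit_above (2 * n) f g (real i / real n) (2 * i + 1)
           \<le> scdl_gap (2 * n) f g (2 * i + 1)"
proof -
  have "real (2 * i + 1 + 1) / real (2 * n) = real (i + 1) / real n"
    using assms(1) by (simp add: field_simps)
  moreover have "deficit_above (2 * n) f g (real i / real n) (2 * i + 1)
      \<le> deficit_above (2 * n) f g (real (2 * i + 1) / real (2 * n)) (2 * i + 1)"
    using assms(1) by (intro deficit_above_mono assms(2)) (simp add: field_simps)
  ultimately show ?thesis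
    by (simp add: scdl_gap_def)
qed

lemma scdl_gap_coarsen_le:
  assumes "0 < n" and "\<And>k. 0 \<le> f k" and "f (2 * n + 1) = 0" and "g (2 * n + 1) = 0"
    and "i \<le> n"
  shows "\<exists>i'\<le>2 * n. scdl_gap n (coarsen f) (coarsen g) i \<le> scdl_gap (2 * n) f g i'"
proof -
  define t\<^sub>1 t\<^sub>2 where "t\<^sub>1 = real (i + 1) / real n" and "t\<^sub>2 = real i / real n"
  define a b where "a = max (g (2 * i + 1) - t\<^sub>1 * f (2 * i + 1)) 0"
    and "b = max (t\<^sub>2 * f (2 * i + 1) - g (2 * i + 1)) 0"
  define A B where "A = excess_below f g t\<^sub>1 (2 * i)"
    and "B = deficit_above (2 * n) f g t\<^sub>2 (2 * i)"
  have coarse: "scdl_gap n (coarsen f) (coarsen g) i \<le> A + B + a / 2 - b / 2"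
    using excess_below_coarsen_le[of f g t\<^sub>1 i]
      deficit_above_coarsen_le[where f = f and g = g and t = t\<^sub>2, OF assms(5,3,4)]
    unfolding scdl_gap_def A_def B_def a_def b_def t\<^sub>1_def[symmetric] t\<^sub>2_def[symmetric]
    by linarith
  show ?thesis
  proof (cases "a \<le> b")
    case True
    then have "scdl_gap n (coarsen f) (coarsen g) i \<le> scdl_gap (2 * n) f g (2 * i)"
      using coarse scdl_gap_even_ge[where f = f and g = g and i = i, OF assms(1,2)]
      unfolding A_def B_def t\<^sub>1_def t\<^sub>2_def by linarith
    then show ?thesis
      using assms(5) by (intro exI[of _ "2 * i"]) auto
  next
    case False
    have "i < n"
    proof (rule ccontr)
      assume "\<not> i < n"
      then have "a = 0"
        using assms(3,4,5) by (simp add: a_def)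
      with False show False
        by (simp add: b_def)
    qed
    then have "B = b + deficit_above (2 * n) f g t\<^sub>2 (2 * i + 1)"
      unfolding B_def b_def deficit_above_def by (subst sum.atLeast_Suc_atMost) auto
    moreover have "excess_below f g t\<^sub>1 (2 * i + 1) = A + a"
      by (simp add: excess_below_def A_def a_def)
    ultimately have "scdl_gap n (coarsen f) (coarsen g) i \<le> scdl_gap (2 * n) f g (2 * i + 1)"
      using coarse False scdl_gap_odd_ge[where f = f and g = g and i = i, OF assms(1,2)]
      unfolding t\<^sub>1_def t\<^sub>2_def by linarith
    then show ?thesis
      using \<open>i < n\<close> by (intro exI[of _ "2 * i + 1"]) auto
  qed
qed

lemma Max_scdl_gap_coarsen_le:
  assumes "0 < n" and "\<And>k. 0 \<le> f k" and "f (2 * n + 1) = 0" and "g (2 * n + 1) = 0"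
  shows "Max (scdl_gap n (coarsen f) (coarsen g) ` {0..n}) \<le> Max (scdl_gap (2 * n) f g ` {0..2 * n})"
proof (rule Max.boundedI)
  fix c assume "c \<in> scdl_gap n (coarsen f) (coarsen g) ` {0..n}"
  then obtain i where "i \<le> n" and c: "c = scdl_gap n (coarsen f) (coarsen g) i" by auto
  then obtain i' where "i' \<le> 2 * n" and "c \<le> scdl_gap (2 * n) f g i'"
    using scdl_gap_coarsen_le[where f = f and g = g, OF assms] by blast
  then show "c \<le> Max (scdl_gap (2 * n) f g ` {0..2 * n})"
    by (intro order_trans[OF _ Max_ge]) auto
qed auto

lemma max_mult_div_diff:
  fixes p r t :: real
  assumes "0 \<le> r" and "r \<le> p"
  shows "p * max (r / p - t) 0 = max (r - t * p) 0"
    and "p * max (t - r / p) 0 = max (t * p - r) 0"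
proof -
  have "p * max (r / p - t) 0 = max (r - t * p) 0 \<and> p * max (t - r / p) 0 = max (t * p - r) 0"
  proof (cases "p = 0")
    case False
    with assms have "0 < p" by simp
    then show ?thesis
      by (simp add: max_mult_distrib_left right_diff_distrib mult.commute[of p])
  qed (use assms in simp)
  then show "p * max (r / p - t) 0 = max (r - t * p) 0"
    and "p * max (t - r / p) 0 = max (t * p - r) 0"
    by simp_all
qed

lemma wt_nonneg: "0 \<le> wt m j p"
  by (simp add: wt_def)

lemma wt_le_1: "wt m j p \<le> 1"
  by (simp add: wt_def)

lemma borel_measurable_wt_fst:
  "(\<lambda>x::real \<times> 'a::topological_space. wt m j (fst x)) \<in> borel_measurable borel"
  unfolding wt_def by (intro borel_measurable_continuous_onI continuous_intros)

lemma borel_measurable_of_bool_snd: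
  "(\<lambda>x::'a::topological_space \<times> bool. of_bool (snd x) :: real) \<in> borel_measurable borel"
  by (intro borel_measurable_continuous_onI
      continuous_on_compose2[of UNIV of_bool, OF _ continuous_on_snd]) simp_all

lemma hat_split:
  "max (1 - \<bar>x\<bar>) 0 = max (1 - \<bar>2 * x + 1\<bar>) 0 / 2 + max (1 - \<bar>2 * x\<bar>) 0 + max (1 - \<bar>2 * x - 1\<bar>) 0 / 2"
  for x :: real
  by (auto simp: max_def abs_if)

lemma wt_coarsen:
  assumes "0 \<le> p"
  shows "wt m j p = coarsen (\<lambda>k. wt (2 * m) k p) j"
proof (cases "j = 0")
  case True
  have "max (1 - \<bar>2 * (real m * p) + 1\<bar>) 0 = 0"
    using assms by simp
  then show ?thesis
    using True hat_split[of "real m * p"] by (simp add: wt_def coarsen_def algebra_simps)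
next
  case False
  then have "real (2 * j - 1) = 2 * real j - 1"
    by (simp add: of_nat_diff)
  with False show ?thesis
    using hat_split[of "real m * p - real j"] by (simp add: wt_def coarsen_def algebra_simps)
qed

lemma wt_eq_0_beyond:
  assumes "p \<le> 1" and "m < i"
  shows "wt m i p = 0"
proof -
  have "real m * p \<le> real m"
    using assms(1) by (simp add: mult_left_le)
  with assms(2) show ?thesis
    by (simp add: wt_def max_def abs_if)
qed

lemma integrable_coarsen:
  assumes "\<And>k. integrable M (F k)"
  shows "integrable M (\<lambda>x. coarsen (\<lambda>k. F k x) j)"
  unfolding coarsen_def using assms
  by (cases "j = 0") (auto intro!: integrable_add integrable_divide_zero)

lemma integral_coarsen:
  assumes "\<And>k. integrable M (F k)"
  shows "(\<integral>x. coarsen (\<lambda>k. F k x) j \<partial>M) = coarsen (\<lambda>k. \<integral>x. F k x \<partial>M) j"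
  using assms by (simp add: coarsen_def)

definition piwy :: "(real \<times> bool) measure \<Rightarrow> nat \<Rightarrow> nat \<Rightarrow> real" where
  "piwy D m j = (\<integral>x. wt m j (fst x) * of_bool (snd x) \<partial>D)"

text \<open>The case split in \<open>qw\<close> is redundant because \<open>x / 0 = 0\<close>.\<close>

lemma qw_eq_piwy_div_piw: "qw D m j = piwy D m j / piw D m j"
  by (simp add: qw_def piwy_def)

lemma piw_nonneg: "0 \<le> piw D m j"
  unfolding piw_def by (intro integral_nonneg_AE AE_I2 wt_nonneg)

lemma piwy_nonneg: "0 \<le> piwy D m j"
  unfolding piwy_def by (intro integral_nonneg_AE AE_I2) (simp add: wt_nonneg)

context
  fixes D :: "(real \<times> bool) measure"
  assumes D: "dist01 D"
begin

lemma integrable_wt_mult: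
  assumes "c \<in> borel_measurable borel" and "\<And>x. \<bar>c x\<bar> \<le> 1"
  shows "integrable D (\<lambda>x. wt m j (fst x) * c x)"
proof -
  interpret prob_space D
    using D by (simp add: dist01_def)
  have "(\<lambda>x. wt m j (fst x) * c x) \<in> borel_measurable borel"
    by (intro borel_measurable_times borel_measurable_wt_fst assms(1))
  moreover have "sets D = sets borel"
    using D by (simp add: dist01_def)
  ultimately have "(\<lambda>x. wt m j (fst x) * c x) \<in> borel_measurable D"
    by (simp cong: measurable_cong_sets)
  moreover have "\<bar>wt m j (fst x) * c x\<bar> \<le> 1" for x
    using wt_nonneg wt_le_1 assms(2) by (simp add: abs_mult mult_le_one)
  ultimately show ?thesis
    by (intro integrable_const_bound[where B = 1]) auto
qed

lemma AE_fst_in_unit_interval: "AE x in D. fst x \<in> {0..1}"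
  using D by (simp add: dist01_def)

lemma integral_wt_mult_coarsen:
  assumes "c \<in> borel_measurable borel" and "\<And>x. \<bar>c x\<bar> \<le> 1"
  shows "(\<integral>x. wt m j (fst x) * c x \<partial>D) = coarsen (\<lambda>k. \<integral>x. wt (2 * m) k (fst x) * c x \<partial>D) j"
proof -
  note integrable = integrable_wt_mult[OF assms]
  have "(\<integral>x. wt m j (fst x) * c x \<partial>D) = (\<integral>x. coarsen (\<lambda>k. wt (2 * m) k (fst x) * c x) j \<partial>D)"
  proof (intro integral_cong_AE borel_measurable_integrable integrable integrable_coarsen)
    show "AE x in D. wt m j (fst x) * c x = coarsen (\<lambda>k. wt (2 * m) k (fst x) * c x) j"
      using AE_fst_in_unit_interval
      by eventually_elim (subst wt_coarsen, simp_all add: coarsen_def algebra_simps)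
  qed
  also have "\<dots> = coarsen (\<lambda>k. \<integral>x. wt (2 * m) k (fst x) * c x \<partial>D) j"
    by (intro integral_coarsen integrable)
  finally show ?thesis .
qed

lemma integral_wt_mult_beyond:
  assumes "m < i"
  shows "(\<integral>x. wt m i (fst x) * c x \<partial>D) = 0"
proof (rule integral_eq_zero_AE)
  show "AE x in D. wt m i (fst x) * c x = 0"
    using AE_fst_in_unit_interval by eventually_elim (simp add: wt_eq_0_beyond assms)
qed

lemma piwy_le_piw: "piwy D m j \<le> piw D m j"
proof -
  have "(\<integral>x. wt m j (fst x) * of_bool (snd x) \<partial>D) \<le> (\<integral>x. wt m j (fst x) * 1 \<partial>D)"
    by (intro integral_mono integrable_wt_mult borel_measurable_of_bool_snd)
      (simp_all add: wt_nonneg)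
  then show ?thesis
    by (simp add: piwy_def piw_def)
qed

lemma piw_coarsen: "piw D m = coarsen (piw D (2 * m))"
proof
  fix j
  show "piw D m j = coarsen (piw D (2 * m)) j"
    using integral_wt_mult_coarsen[of "\<lambda>_. 1" m j] by (simp add: piw_def[abs_def])
qed

lemma piwy_coarsen: "piwy D m = coarsen (piwy D (2 * m))"
proof
  fix j
  show "piwy D m j = coarsen (piwy D (2 * m)) j"
    using integral_wt_mult_coarsen[OF borel_measurable_of_bool_snd, of m j]
    by (simp add: piwy_def[abs_def])
qed

lemma piw_beyond: "m < i \<Longrightarrow> piw D m i = 0"
  using integral_wt_mult_beyond[of m i "\<lambda>_. 1"] by (simp add: piw_def)

lemma piwy_beyond: "m < i \<Longrightarrow> piwy D m i = 0"
  using integral_wt_mult_beyond by (simp add: piwy_def)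

lemma SCDL_eq_Max_scdl_gap: "SCDL m D = Max (scdl_gap m (piw D m) (piwy D m) ` {0..m})"
proof -
  have "piw D m j * max (qw D m j - t) 0 = max (piwy D m j - t * piw D m j) 0"
    and "piw D m j * max (t - qw D m j) 0 = max (t * piw D m j - piwy D m j) 0" for j t
    using max_mult_div_diff[OF piwy_nonneg piwy_le_piw] by (simp_all add: qw_eq_piwy_div_piw)
  then show ?thesis
    unfolding SCDL_def scdl_gap_def excess_below_def deficit_above_def by (simp only:)
qed

end

theorem lemma3p3:
  fixes m :: nat and D :: "(real \<times> bool) measure"
  assumes "m > 0" and "dist01 D"
  shows "SCDL (2 * m) D \<ge> SCDL m D"
proof -
  have "SCDL m D = Max (scdl_gap m (coarsen (piw D (2 * m))) (coarsen (piwy D (2 * m))) ` {0..m})"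
    unfolding SCDL_eq_Max_scdl_gap[OF assms(2), of m] piw_coarsen[OF assms(2), of m]
      piwy_coarsen[OF assms(2), of m] ..
  also have "\<dots> \<le> Max (scdl_gap (2 * m) (piw D (2 * m)) (piwy D (2 * m)) ` {0..2 * m})"
    using assms by (intro Max_scdl_gap_coarsen_le piw_nonneg piw_beyond piwy_beyond) simp_all
  also have "\<dots> = SCDL (2 * m) D"
    by (rule SCDL_eq_Max_scdl_gap[OF assms(2), symmetric])
  finally show ?thesis .
qed

end
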